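(* Let $A$ be a $\mathbb{G}$-predictable set. Then $A\in\mathcal{L}^o$ if and only if, for every $\mathbb{G}$-optional process $Y$, the process $Y\mathbf{1}_A$ satisfies the global optional splitting formula at $\tau$ with respect to $\mathbb{F}$.
   Context: Let $(\Omega,\mathcal{A},\mathbb{Q})$ be a probability space with a right-continuous filtration $\mathbb{F}=(\mathcal{F}_t)_{t\ge0}$ such that $\mathcal{F}_0$ contains $\mathcal{N}^{\mathcal{F}_\infty}$, where for a $\sigma$-algebra $\mathcal{T}\subset\mathcal{A}$, $\mathcal{N}^{\mathcal{T}}$ denotes the $\sigma$-algebra generated by all subsets of $\mathcal{T}$-measurable $\mathbb{Q}$-null sets. Let $\tau$ be a random variable with values in $[0,\infty]$, let $\mathcal{N}=\mathcal{N}^{\sigma(\tau)\vee\mathcal{F}_\infty}$, and let $\mathbb{G}=(\mathcal{G}_t)_{t\ge0}$ with $\mathcal{G}_t=\mathcal{N}\vee\bigcap_{s>t}(\mathcal{F}_s\vee\sigma(\tau\wedge s))$. Identities between processes are understood up to indistinguishability outside an $\mathcal{N}$-measurable $\mathbb{Q}$-null set. For a function $Y''$ on $[0,\infty]\times(\mathbb{R}_+\times\Omega)$, $Y''(\tau)$ denotes the process $(t,\omega)\mapsto Y''(\tau(\omega),t,\omega)$. A $\mathbb{G}$-optional process $Y$ satisfies the optional splitting formula on a $\mathbb{G}$-optional set $A$ (at $\tau$ with respect to $\mathbb{F}$) if there exist $Y'\in\mathcal{O}(\mathbb{F})$ and a $\mathcal{B}[0,\infty]\otimes\mathcal{O}(\mathbb{F})$-measurable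 function $Y''$ with $Y\mathbf{1}_A=(Y'\mathbf{1}_{[0,\tau)}+Y''(\tau)\mathbf{1}_{[\tau,\infty)})\mathbf{1}_A$; the global optional splitting formula is the case $A=\mathbb{R}_+\times\Omega$. $\mathcal{L}^o$ is the family of $\mathbb{G}$-optional sets $A$ such that every $\mathbb{G}$-optional process satisfies the optional splitting formula on $A$. *)

theory Defs
  imports "HOL-Probability.Probability"
begin

text \<open>The probability space is M (with Omega = space M, A = sets M, Q = M).
  A filtration is a family of set systems F :: real => 'a set set indexed by times t >= 0.
  Processes are real-valued functions on pairs (t, omega); only their values on
  the time domain R_+ x Omega, i.e. {0..} x space M, matter.\<close>

definition timedom :: "'a measure \<Rightarrow> (real \<times> 'a) set" where
  "timedom M = {0..} \<times> space M"

definition is_filtration :: "'a measure \<Rightarrow> (real \<Rightarrow> 'a set set) \<Rightarrow> bool" where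
  "is_filtration M F \<longleftrightarrow>
     (\<forall>t\<ge>0. sigma_algebra (space M) (F t) \<and> F t \<subseteq> sets M) \<and>
     (\<forall>s t. 0 \<le> s \<longrightarrow> s \<le> t \<longrightarrow> F s \<subseteq> F t)"

definition right_continuous_filtration :: "(real \<Rightarrow> 'a set set) \<Rightarrow> bool" where
  "right_continuous_filtration F \<longleftrightarrow> (\<forall>t\<ge>0. F t = (\<Inter>s\<in>{t<..}. F s))"

definition F_infty :: "'a measure \<Rightarrow> (real \<Rightarrow> 'a set set) \<Rightarrow> 'a set set" where
  "F_infty M F = sigma_sets (space M) (\<Union>t\<in>{0..}. F t)"

definition null_gen :: "'a measure \<Rightarrow> 'a set set \<Rightarrow> 'a set set" where
  "null_gen M T = sigma_sets (space M)
     {B. B \<subseteq> space M \<and> (\<exists>Z\<in>T. Z \<in> sets M \<and> emeasure M Z = 0 \<and> B \<subseteq> Z)}"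

definition sjoin :: "'a measure \<Rightarrow> 'a set set \<Rightarrow> 'a set set \<Rightarrow> 'a set set" where
  "sjoin M S T = sigma_sets (space M) (S \<union> T)"

definition sigma_rv :: "'a measure \<Rightarrow> ('a \<Rightarrow> 'b::topological_space) \<Rightarrow> 'a set set" where
  "sigma_rv M X = {X -` B \<inter> space M | B. B \<in> sets borel}"

definition Nsig :: "'a measure \<Rightarrow> (real \<Rightarrow> 'a set set) \<Rightarrow> ('a \<Rightarrow> ennreal) \<Rightarrow> 'a set set" where
  "Nsig M F \<tau> = null_gen M (sjoin M (sigma_rv M \<tau>) (F_infty M F))"

definition Gfilt :: "'a measure \<Rightarrow> (real \<Rightarrow> 'a set set) \<Rightarrow> ('a \<Rightarrow> ennreal) \<Rightarrow> real \<Rightarrow> 'a set set" where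
  "Gfilt M F \<tau> t = sjoin M (Nsig M F \<tau>)
     (\<Inter>s\<in>{t<..}. sjoin M (F s) (sigma_rv M (\<lambda>\<omega>. min (\<tau> \<omega>) (ennreal s))))"

definition adapted :: "'a measure \<Rightarrow> (real \<Rightarrow> 'a set set) \<Rightarrow> (real \<times> 'a \<Rightarrow> real) \<Rightarrow> bool" where
  "adapted M H X \<longleftrightarrow>
     (\<forall>t\<ge>0. \<forall>B\<in>sets borel. {\<omega>\<in>space M. X (t, \<omega>) \<in> B} \<in> H t)"

definition cadlag :: "'a measure \<Rightarrow> (real \<times> 'a \<Rightarrow> real) \<Rightarrow> bool" where
  "cadlag M X \<longleftrightarrow> (\<forall>\<omega>\<in>space M. \<forall>t\<ge>0.
      continuous (at_right t) (\<lambda>s. X (s, \<omega>)) \<and>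
      (t > 0 \<longrightarrow> (\<exists>l. ((\<lambda>s. X (s, \<omega>)) \<longlongrightarrow> l) (at_left t))))"

definition optional_sets :: "'a measure \<Rightarrow> (real \<Rightarrow> 'a set set) \<Rightarrow> (real \<times> 'a) set set" where
  "optional_sets M H = sigma_sets (timedom M)
     {X -` B \<inter> timedom M | X B. cadlag M X \<and> adapted M H X \<and> B \<in> sets borel}"

definition predictable_sets :: "'a measure \<Rightarrow> (real \<Rightarrow> 'a set set) \<Rightarrow> (real \<times> 'a) set set" where
  "predictable_sets M H = sigma_sets (timedom M)
     ({{0} \<times> B | B. B \<in> H 0} \<union> {{s<..t} \<times> B | s t B. 0 \<le> s \<and> s \<le> t \<and> B \<in> H s})"

definition optional_measure :: "'a measure \<Rightarrow> (real \<Rightarrow> 'a set set) \<Rightarrow> (real \<times> 'a) measure" where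
  "optional_measure M H = measure_of (timedom M) (optional_sets M H) (\<lambda>_. 0)"

definition optional_process :: "'a measure \<Rightarrow> (real \<Rightarrow> 'a set set) \<Rightarrow> (real \<times> 'a \<Rightarrow> real) \<Rightarrow> bool" where
  "optional_process M H Y \<longleftrightarrow> (\<forall>B\<in>sets borel. Y -` B \<inter> timedom M \<in> optional_sets M H)"

definition N_null :: "'a measure \<Rightarrow> (real \<Rightarrow> 'a set set) \<Rightarrow> ('a \<Rightarrow> ennreal) \<Rightarrow> 'a set \<Rightarrow> bool" where
  "N_null M F \<tau> E \<longleftrightarrow> E \<in> Nsig M F \<tau> \<and> (\<exists>Z\<in>sets M. emeasure M Z = 0 \<and> E \<subseteq> Z)"

definition splitting_on ::
  "'a measure \<Rightarrow> (real \<Rightarrow> 'a set set) \<Rightarrow> ('a \<Rightarrow> ennreal) \<Rightarrow> (real \<times> 'a \<Rightarrow> real) \<Rightarrow> (real \<times> 'a) set \<Rightarrow> bool" where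
  "splitting_on M F \<tau> Y A \<longleftrightarrow>
     (\<exists>Y' Y''. optional_process M F Y' \<and>
        (\<lambda>(u, p). Y'' u p) \<in> borel_measurable (borel \<Otimes>\<^sub>M optional_measure M F) \<and>
        (\<exists>E. N_null M F \<tau> E \<and>
           (\<forall>\<omega>\<in>space M - E. \<forall>t\<ge>0.
              Y (t, \<omega>) * indicator A (t, \<omega>) =
              (Y' (t, \<omega>) * indicator {p. ennreal (fst p) < \<tau> (snd p)} (t, \<omega>)
               + Y'' (\<tau> \<omega>) (t, \<omega>) * indicator {p. \<tau> (snd p) \<le> ennreal (fst p)} (t, \<omega>))
              * indicator A (t, \<omega>))))"

definition global_splitting ::
  "'a measure \<Rightarrow> (real \<Rightarrow> 'a set set) \<Rightarrow> ('a \<Rightarrow> ennreal) \<Rightarrow> (real \<times> 'a \<Rightarrow> real) \<Rightarrow> bool" where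
  "global_splitting M F \<tau> Y \<longleftrightarrow> splitting_on M F \<tau> Y (timedom M)"

definition L_o :: "'a measure \<Rightarrow> (real \<Rightarrow> 'a set set) \<Rightarrow> ('a \<Rightarrow> ennreal) \<Rightarrow> (real \<times> 'a) set set" where
  "L_o M F \<tau> = {A. A \<in> optional_sets M (Gfilt M F \<tau>) \<and>
     (\<forall>Y. optional_process M (Gfilt M F \<tau>) Y \<longrightarrow> splitting_on M F \<tau> Y A)}"

end

theory Submission
  imports Defs
begin

text \<open>Every \<G>-predictable set A splits as a set: outside an N-null set, A agrees before \<tau>
  with an F-optional set A', and from \<tau> on with the section at \<tau> of a
  B[0,\<infinity>] \<otimes> O(F)-measurable set A''. It suffices to check this on the generators
  {0} \<times> B and ]u,v] \<times> B. An event of \<G>_u decomposes, for every s > u, into an F_s-event on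
  {s < \<tau>} and a B[0,\<infinity>] \<otimes> F_s-event evaluated at \<tau> on {\<tau> \<le> s}, the events of N being null
  or co-null; at time 0 the decompositions at the times 1/(n+1) are glued by right-continuity
  of F. Given such A' and A'', a splitting (Y', Y'') of Y on A yields the global splitting
  (Y' 1_A', Y'' 1_A'') of Y 1_A, and conversely a global splitting of Y 1_A is a splitting of Y
  on A.\<close>

section \<open>Optional and predictable sets\<close>

lemma optional_sets_sigma_algebra: "sigma_algebra (timedom M) (optional_sets M H)"
  unfolding optional_sets_def by (rule sigma_algebra_sigma_sets) auto

lemma space_optional_measure: "space (optional_measure M H) = timedom M"
  unfolding optional_measure_def
  by (rule space_measure_of) (auto simp: optional_sets_def dest: sigma_sets_into_sp[rotated])

lemma sets_optional_measure: "sets (optional_measure M H) = optional_sets M H"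
  unfolding optional_measure_def
  using sigma_algebra.sets_measure_of_eq[OF optional_sets_sigma_algebra] .

lemma optional_process_iff_measurable:
  "optional_process M H Y \<longleftrightarrow> Y \<in> borel_measurable (optional_measure M H)"
  unfolding optional_process_def measurable_def space_optional_measure sets_optional_measure
  by auto

lemma optional_sets_Diff:
  "A \<in> optional_sets M H \<Longrightarrow> B \<in> optional_sets M H \<Longrightarrow> A - B \<in> optional_sets M H"
  using sets.Diff[of A "optional_measure M H" B] by (simp add: sets_optional_measure)

lemma optional_sets_countable_UN:
  "(\<And>i::nat. A i \<in> optional_sets M H) \<Longrightarrow> (\<Union>i. A i) \<in> optional_sets M H"
  unfolding optional_sets_def by (rule sigma_sets.Union)

definition monotone_sigma_family :: "'a measure \<Rightarrow> (real \<Rightarrow> 'a set set) \<Rightarrow> bool" where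
  "monotone_sigma_family M H \<longleftrightarrow>
     (\<forall>t\<ge>0. sigma_algebra (space M) (H t)) \<and> (\<forall>s t. 0 \<le> s \<longrightarrow> s \<le> t \<longrightarrow> H s \<subseteq> H t)"

lemma monotone_sigma_familyD:
  assumes "monotone_sigma_family M H"
  shows monotone_sigma_family_sigma_algebra: "0 \<le> t \<Longrightarrow> sigma_algebra (space M) (H t)"
    and monotone_sigma_family_mono: "0 \<le> s \<Longrightarrow> s \<le> t \<Longrightarrow> H s \<subseteq> H t"
  using assms unfolding monotone_sigma_family_def by auto

lemma monotone_sigma_family_subset_space:
  "monotone_sigma_family M H \<Longrightarrow> 0 \<le> s \<Longrightarrow> D \<in> H s \<Longrightarrow> D \<subseteq> space M"
  using monotone_sigma_family_sigma_algebra[of M H s] unfolding sigma_algebra_iff2 by auto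

lemma is_filtration_monotone_sigma_family:
  "is_filtration M F \<Longrightarrow> monotone_sigma_family M F"
  unfolding is_filtration_def monotone_sigma_family_def by auto

lemma cadlag_indicator_ray:
  fixes c :: real
  shows "cadlag M (indicator ({c..} \<times> D))"
  unfolding cadlag_def
proof (intro ballI allI impI conjI)
  fix \<omega> and t :: real
  let ?f = "\<lambda>s. indicator ({c..} \<times> D) (s, \<omega>) :: real"
  have "\<forall>\<^sub>F s in at_right t. ?f s = ?f t"
  proof (cases "c \<le> t")
    case True
    then show ?thesis by (intro eventually_at_rightI[of t "t+1"]) (auto simp: indicator_def)
  next
    case False
    then show ?thesis by (intro eventually_at_rightI[of t c]) (auto simp: indicator_def)
  qed
  then show "continuous (at_right t) ?f"
    unfolding continuous_within by (rule tendsto_eventually)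
  have "\<forall>\<^sub>F s in at_left t. ?f s = (if t \<le> c then 0 else indicator D \<omega>)"
  proof (cases "t \<le> c")
    case True
    then show ?thesis by (intro eventually_at_leftI[of "t-1" t]) (auto simp: indicator_def)
  next
    case False
    then show ?thesis by (intro eventually_at_leftI[of c t]) (auto simp: indicator_def)
  qed
  then show "\<exists>l. (?f \<longlongrightarrow> l) (at_left t)"
    by (blast intro: tendsto_eventually)
qed

lemma adapted_indicator_ray:
  assumes H: "monotone_sigma_family M H" and c': "0 \<le> c'" "c' \<le> c" and D: "D \<in> H c'"
  shows "adapted M H (indicator ({c..} \<times> D))"
  unfolding adapted_def
proof (intro allI impI ballI)
  fix t :: real and B :: "real set" assume t: "0 \<le> t"
  interpret sigma_algebra "space M" "H t"
    using monotone_sigma_family_sigma_algebra[OF H t] .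
  show "{\<omega> \<in> space M. indicator ({c..} \<times> D) (t, \<omega>) \<in> B} \<in> H t"
  proof (cases "c \<le> t")
    case True
    have "c' \<le> t" using c' True by linarith
    then have "D \<in> H t"
      using monotone_sigma_family_mono[OF H c'(1)] D by blast
    moreover have "{\<omega> \<in> space M. indicator ({c..} \<times> D) (t, \<omega>) \<in> B} =
        (if 1 \<in> B then D else {}) \<union> (if 0 \<in> B then space M - D else {})"
      using True monotone_sigma_family_subset_space[OF H c'(1) D] by (auto simp: indicator_def)
    ultimately show ?thesis by (simp add: Un Diff)
  next
    case False
    then have "{\<omega> \<in> space M. indicator ({c..} \<times> D) (t, \<omega>) \<in> B} =
        (if 0 \<in> B then space M else {})"
      by (auto simp: indicator_def)
    then show ?thesis by simp
  qed
qed

lemma optional_sets_ray: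
  assumes H: "monotone_sigma_family M H" and c': "0 \<le> c'" "c' \<le> c" and D: "D \<in> H c'"
  shows "{c..} \<times> D \<in> optional_sets M H"
proof -
  have "D \<subseteq> space M"
    using monotone_sigma_family_subset_space[OF H c'(1) D] .
  then have "{c..} \<times> D = indicator ({c..} \<times> D) -` {1::real} \<inter> timedom M"
    using c' by (auto simp: timedom_def indicator_def)
  also have "\<dots> \<in> optional_sets M H"
    unfolding optional_sets_def
    by (rule sigma_sets.Basic, rule CollectI, intro exI conjI refl)
       (auto intro: cadlag_indicator_ray adapted_indicator_ray[OF assms])
  finally show ?thesis .
qed

lemma optional_sets_open_ray:
  assumes H: "monotone_sigma_family M H" and a: "0 \<le> a" and D: "D \<in> H a"
  shows "{a<..} \<times> D \<in> optional_sets M H"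
proof -
  have "{a<..} = (\<Union>n::nat. {a + 1 / Suc n..})"
  proof (intro set_eqI iffI)
    fix t assume "t \<in> {a<..}"
    then obtain n where "1 / real (Suc n) < t - a"
      by (metis diff_gt_0_iff_gt greaterThan_iff nat_approx_posE)
    then show "t \<in> (\<Union>n::nat. {a + 1 / Suc n..})" by (auto intro!: exI[of _ n])
  next
    fix t assume "t \<in> (\<Union>n::nat. {a + 1 / Suc n..})"
    then obtain n :: nat where "a + 1 / Suc n \<le> t" by auto
    moreover have "0 < 1 / real (Suc n)" by simp
    ultimately show "t \<in> {a<..}" unfolding greaterThan_iff by linarith
  qed
  then have "{a<..} \<times> D = (\<Union>n::nat. {a + 1 / Suc n..} \<times> D)" by auto
  also have "\<dots> \<in> optional_sets M H"
    using a by (intro optional_sets_countable_UN optional_sets_ray[OF H a _ D]) auto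
  finally show ?thesis .
qed

lemma optional_sets_interval:
  assumes H: "monotone_sigma_family M H" and "0 \<le> a" "a \<le> b" and D: "D \<in> H a"
  shows "{a<..b} \<times> D \<in> optional_sets M H"
proof -
  have "{a<..b} \<times> D = {a<..} \<times> D - {b<..} \<times> D" by auto
  also have "\<dots> \<in> optional_sets M H"
    using assms monotone_sigma_family_mono[OF H]
    by (intro optional_sets_Diff optional_sets_open_ray[OF H]) auto
  finally show ?thesis .
qed

lemma optional_sets_zero:
  assumes H: "monotone_sigma_family M H" and D: "D \<in> H 0"
  shows "{0} \<times> D \<in> optional_sets M H"
proof -
  have "{0::real} \<times> D = {0..} \<times> D - {0<..} \<times> D" by (auto simp: less_le)
  also have "\<dots> \<in> optional_sets M H"
    by (intro optional_sets_Diff optional_sets_open_ray[OF H _ D] optional_sets_ray[OF H _ _ D]) auto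
  finally show ?thesis .
qed

lemma predictable_subset_optional:
  assumes H: "monotone_sigma_family M H"
  shows "predictable_sets M H \<subseteq> optional_sets M H"
  unfolding predictable_sets_def
  by (rule sigma_algebra.sigma_sets_subset[OF optional_sets_sigma_algebra])
     (auto intro: optional_sets_zero[OF H] optional_sets_interval[OF H])

section \<open>Null sets of N and the enlarged filtration\<close>

lemma N_null_iff: "N_null M F \<tau> E \<longleftrightarrow> E \<in> Nsig M F \<tau> \<and> (\<exists>Z\<in>null_sets M. E \<subseteq> Z)"
  unfolding N_null_def by auto

lemma N_null_empty: "N_null M F \<tau> {}"
  unfolding N_null_iff Nsig_def null_gen_def by (auto intro: sigma_sets.Empty)

lemma N_null_countable_UN:
  assumes "\<And>i::nat. N_null M F \<tau> (E i)"
  shows "N_null M F \<tau> (\<Union>i. E i)"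
proof -
  obtain Z where Z: "\<And>i. Z i \<in> null_sets M" "\<And>i. E i \<subseteq> Z i"
    using assms unfolding N_null_iff by metis
  have "(\<Union>i. E i) \<in> Nsig M F \<tau>"
    using assms unfolding N_null_iff Nsig_def null_gen_def by (intro sigma_sets.Union) auto
  moreover have "(\<Union>i. Z i) \<in> null_sets M" "(\<Union>i. E i) \<subseteq> (\<Union>i. Z i)"
    using Z by auto
  ultimately show ?thesis unfolding N_null_iff by blast
qed

lemma N_null_Un:
  assumes "N_null M F \<tau> E1" "N_null M F \<tau> E2"
  shows "N_null M F \<tau> (E1 \<union> E2)"
proof -
  have "E1 \<union> E2 = (\<Union>i::nat. if i = 0 then E1 else E2)"
    by (auto split: if_splits)
  moreover have "N_null M F \<tau> (\<Union>i::nat. if i = 0 then E1 else E2)"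
    using assms by (intro N_null_countable_UN) auto
  ultimately show ?thesis by simp
qed

lemma Nsig_null_or_conull:
  assumes "B \<in> Nsig M F \<tau>"
  shows "N_null M F \<tau> B \<or> N_null M F \<tau> (space M - B)"
  using assms unfolding Nsig_def null_gen_def
proof (induction rule: sigma_sets.induct)
  case (Basic a)
  then have "N_null M F \<tau> a"
    unfolding N_null_def Nsig_def null_gen_def by blast
  then show ?case ..
next
  case Empty
  then show ?case using N_null_empty by blast
next
  case (Compl a)
  have "space M - (space M - a) = a"
    using sigma_sets_into_sp[OF _ Compl(1)] by auto
  then show ?case using Compl(2) by auto
next
  case (Union a)
  show ?case
  proof (cases "\<forall>i. N_null M F \<tau> (a i)")
    case True
    then show ?thesis using N_null_countable_UN by blast
  next
    case False
    then obtain i where "N_null M F \<tau> (space M - a i)"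
      using Union(2) by blast
    then obtain Z where Z: "Z \<in> null_sets M" "space M - a i \<subseteq> Z"
      unfolding N_null_iff by blast
    have "space M - (\<Union>i. a i) \<in> Nsig M F \<tau>"
      unfolding Nsig_def null_gen_def by (intro sigma_sets.Compl sigma_sets.Union Union(1))
    moreover have "space M - (\<Union>i. a i) \<subseteq> Z" using Z(2) by blast
    ultimately have "N_null M F \<tau> (space M - (\<Union>i. a i))"
      using Z(1) unfolding N_null_iff by blast
    then show ?thesis by blast
  qed
qed

lemma is_filtration_subset_Pow: "is_filtration M F \<Longrightarrow> 0 \<le> s \<Longrightarrow> F s \<subseteq> Pow (space M)"
  unfolding is_filtration_def using sets.sets_into_space by blast

lemma Gfilt_monotone_sigma_family:
  assumes F: "is_filtration M F"
  shows "monotone_sigma_family M (Gfilt M F \<tau>)"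
  unfolding monotone_sigma_family_def
proof (intro conjI allI impI)
  fix t :: real assume t: "0 \<le> t"
  have gen: "F (t + 1) \<union> sigma_rv M (\<lambda>\<omega>. min (\<tau> \<omega>) (ennreal (t + 1))) \<subseteq> Pow (space M)"
    using is_filtration_subset_Pow[OF F, of "t + 1"] t by (auto simp: sigma_rv_def)
  have "(\<Inter>s\<in>{t<..}. sjoin M (F s) (sigma_rv M (\<lambda>\<omega>. min (\<tau> \<omega>) (ennreal s))))
      \<subseteq> sjoin M (F (t + 1)) (sigma_rv M (\<lambda>\<omega>. min (\<tau> \<omega>) (ennreal (t + 1))))"
    by auto
  also have "\<dots> \<subseteq> Pow (space M)"
    unfolding sjoin_def by (auto dest: sigma_sets_into_sp[OF gen])
  finally have "Nsig M F \<tau> \<union>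
      (\<Inter>s\<in>{t<..}. sjoin M (F s) (sigma_rv M (\<lambda>\<omega>. min (\<tau> \<omega>) (ennreal s)))) \<subseteq> Pow (space M)"
    unfolding Nsig_def null_gen_def by (auto dest: sigma_sets_into_sp[rotated])
  then show "sigma_algebra (space M) (Gfilt M F \<tau> t)"
    unfolding Gfilt_def sjoin_def by (rule sigma_algebra_sigma_sets)
next
  fix s t :: real assume "0 \<le> s" "s \<le> t"
  then show "Gfilt M F \<tau> s \<subseteq> Gfilt M F \<tau> t"
    unfolding Gfilt_def sjoin_def by (intro sigma_sets_mono') auto
qed

section \<open>Decomposition of \<G>-events at later times\<close>

definition borel_prod_sets :: "'a measure \<Rightarrow> 'a set set \<Rightarrow> (ennreal \<times> 'a) set set" where
  "borel_prod_sets M S = sigma_sets (UNIV \<times> space M) {R \<times> D | R D. R \<in> sets borel \<and> D \<in> S}"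

definition decomposable_at ::
  "'a measure \<Rightarrow> (real \<Rightarrow> 'a set set) \<Rightarrow> ('a \<Rightarrow> ennreal) \<Rightarrow> real \<Rightarrow> 'a set \<Rightarrow> bool" where
  "decomposable_at M F \<tau> s B \<longleftrightarrow> (\<exists>E B1 C. N_null M F \<tau> E \<and> B1 \<in> F s \<and> C \<in> borel_prod_sets M (F s) \<and>
     (\<forall>\<omega>\<in>space M - E. (ennreal s < \<tau> \<omega> \<longrightarrow> (\<omega> \<in> B \<longleftrightarrow> \<omega> \<in> B1)) \<and>
                        (\<tau> \<omega> \<le> ennreal s \<longrightarrow> (\<omega> \<in> B \<longleftrightarrow> (\<tau> \<omega>, \<omega>) \<in> C))))"

lemma borel_prod_setsI: "R \<in> sets borel \<Longrightarrow> D \<in> S \<Longrightarrow> R \<times> D \<in> borel_prod_sets M S"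
  unfolding borel_prod_sets_def by (blast intro: sigma_sets.Basic)

lemma decomposable_at_event:
  "B \<in> F s \<Longrightarrow> decomposable_at M F \<tau> s B"
  unfolding decomposable_at_def
  by (intro exI[of _ "{}"] exI[of _ B] exI[of _ "UNIV \<times> B"])
     (auto simp: N_null_empty borel_prod_setsI)

lemma decomposable_at_stopped:
  assumes "sigma_algebra (space M) (F s)"
    and B: "B \<in> sigma_rv M (\<lambda>\<omega>. min (\<tau> \<omega>) (ennreal s))"
  shows "decomposable_at M F \<tau> s B"
proof -
  interpret sigma_algebra "space M" "F s" by fact
  obtain R where R: "R \<in> sets borel" "B = (\<lambda>\<omega>. min (\<tau> \<omega>) (ennreal s)) -` R \<inter> space M"
    using B unfolding sigma_rv_def by blast
  show ?thesis
    unfolding decomposable_at_def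
    by (intro exI[of _ "{}"] exI[of _ "if ennreal s \<in> R then space M else {}"]
        exI[of _ "R \<times> space M"])
       (use R in \<open>auto simp: N_null_empty borel_prod_setsI min_def\<close>)
qed

lemma decomposable_at_null_sigma:
  assumes "sigma_algebra (space M) (F s)" and B: "B \<in> Nsig M F \<tau>"
  shows "decomposable_at M F \<tau> s B"
proof -
  interpret sigma_algebra "space M" "F s" by fact
  from Nsig_null_or_conull[OF B] show ?thesis
  proof
    assume "N_null M F \<tau> B"
    then show ?thesis
      unfolding decomposable_at_def
      by (intro exI[of _ B] exI[of _ "{}"]) (auto simp: borel_prod_sets_def sigma_sets.Empty)
  next
    assume "N_null M F \<tau> (space M - B)"
    then show ?thesis
      unfolding decomposable_at_def
      by (intro exI[of _ "space M - B"] exI[of _ "space M"] exI[of _ "UNIV \<times> space M"])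
         (auto simp: borel_prod_setsI)
  qed
qed

lemma decomposable_at_compl:
  assumes "sigma_algebra (space M) (F s)" and "decomposable_at M F \<tau> s B"
  shows "decomposable_at M F \<tau> s (space M - B)"
proof -
  interpret sigma_algebra "space M" "F s" by fact
  obtain E B1 C where "N_null M F \<tau> E" "B1 \<in> F s" "C \<in> borel_prod_sets M (F s)"
    "\<forall>\<omega>\<in>space M - E. (ennreal s < \<tau> \<omega> \<longrightarrow> (\<omega> \<in> B \<longleftrightarrow> \<omega> \<in> B1)) \<and>
                      (\<tau> \<omega> \<le> ennreal s \<longrightarrow> (\<omega> \<in> B \<longleftrightarrow> (\<tau> \<omega>, \<omega>) \<in> C))"
    using assms(2) unfolding decomposable_at_def by blast
  moreover have "UNIV \<times> space M - C \<in> borel_prod_sets M (F s)"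
    using \<open>C \<in> borel_prod_sets M (F s)\<close> unfolding borel_prod_sets_def by (rule sigma_sets.Compl)
  ultimately show ?thesis
    unfolding decomposable_at_def
    by (intro exI[of _ E] exI[of _ "space M - B1"] exI[of _ "UNIV \<times> space M - C"]) auto
qed

lemma decomposable_at_countable_UN:
  assumes "sigma_algebra (space M) (F s)" and "\<And>i::nat. decomposable_at M F \<tau> s (B i)"
  shows "decomposable_at M F \<tau> s (\<Union>i. B i)"
proof -
  interpret sigma_algebra "space M" "F s" by fact
  obtain E B1 C where dec: "\<And>i. N_null M F \<tau> (E i)" "\<And>i. B1 i \<in> F s"
    "\<And>i. C i \<in> borel_prod_sets M (F s)"
    "\<And>i. \<forall>\<omega>\<in>space M - E i. (ennreal s < \<tau> \<omega> \<longrightarrow> (\<omega> \<in> B i \<longleftrightarrow> \<omega> \<in> B1 i)) \<and>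
                      (\<tau> \<omega> \<le> ennreal s \<longrightarrow> (\<omega> \<in> B i \<longleftrightarrow> (\<tau> \<omega>, \<omega>) \<in> C i))"
    using assms(2) unfolding decomposable_at_def by metis
  have "N_null M F \<tau> (\<Union>i. E i)" using dec(1) by (rule N_null_countable_UN)
  moreover have "(\<Union>i. C i) \<in> borel_prod_sets M (F s)"
    using dec(3) unfolding borel_prod_sets_def by (rule sigma_sets.Union)
  ultimately show ?thesis
    unfolding decomposable_at_def using dec(2,4)
    by (intro exI[of _ "\<Union>i. E i"] exI[of _ "\<Union>i. B1 i"] exI[of _ "\<Union>i. C i"]) blast
qed

lemma decomposable_at_sigma_sets:
  assumes sa: "sigma_algebra (space M) (F s)"
    and gen: "\<And>B. B \<in> S \<Longrightarrow> decomposable_at M F \<tau> s B"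
    and B: "B \<in> sigma_sets (space M) S"
  shows "decomposable_at M F \<tau> s B"
  using B
proof (induction rule: sigma_sets.induct)
  case (Basic B)
  then show ?case by (rule gen)
next
  case Empty
  interpret sigma_algebra "space M" "F s" by (fact sa)
  show ?case by (simp add: decomposable_at_event)
next
  case (Compl B)
  then show ?case using decomposable_at_compl[where M=M and F=F and s=s, OF sa] by blast
next
  case (Union B)
  then show ?case using decomposable_at_countable_UN[where M=M and F=F and s=s, OF sa] by blast
qed

lemma decomposable_at_Gfilt:
  assumes F: "is_filtration M F" and "0 \<le> u" "u < s" and B: "B \<in> Gfilt M F \<tau> u"
  shows "decomposable_at M F \<tau> s B"
proof -
  have sa: "sigma_algebra (space M) (F s)"
    using F \<open>0 \<le> u\<close> \<open>u < s\<close> unfolding is_filtration_def by simp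
  note from_gen = decomposable_at_sigma_sets[where M=M and F=F and s=s, OF sa, rotated]
  have join: "decomposable_at M F \<tau> s B"
    if "B \<in> sigma_sets (space M) (F s \<union> sigma_rv M (\<lambda>\<omega>. min (\<tau> \<omega>) (ennreal s)))" for B
    using that by (rule from_gen)
       (auto intro: decomposable_at_event decomposable_at_stopped[where M=M and F=F and s=s, OF sa])
  have "B \<in> sigma_sets (space M) (Nsig M F \<tau> \<union>
      (\<Inter>r\<in>{u<..}. sigma_sets (space M) (F r \<union> sigma_rv M (\<lambda>\<omega>. min (\<tau> \<omega>) (ennreal r)))))"
    using B unfolding Gfilt_def sjoin_def .
  then show ?thesis
  proof (rule from_gen)
    fix B
    assume "B \<in> Nsig M F \<tau> \<union>
      (\<Inter>r\<in>{u<..}. sigma_sets (space M) (F r \<union> sigma_rv M (\<lambda>\<omega>. min (\<tau> \<omega>) (ennreal r))))"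
    then show "decomposable_at M F \<tau> s B"
      using \<open>u < s\<close> join decomposable_at_null_sigma[where M=M and F=F and s=s, OF sa] by blast
  qed
qed

section \<open>Splitting of predictable sets\<close>

lemma mem_liminf_iff_eventually:
  assumes "\<forall>\<^sub>F n in sequentially. x \<in> B \<longleftrightarrow> x \<in> X n"
  shows "x \<in> B \<longleftrightarrow> x \<in> (\<Union>k. \<Inter>n\<in>{k..}. X n)"
proof -
  obtain N where N: "\<And>n. N \<le> n \<Longrightarrow> x \<in> B \<longleftrightarrow> x \<in> X n"
    using assms unfolding eventually_sequentially by blast
  show ?thesis
  proof
    assume "x \<in> B"
    then show "x \<in> (\<Union>k. \<Inter>n\<in>{k..}. X n)" using N by blast
  next
    assume "x \<in> (\<Union>k. \<Inter>n\<in>{k..}. X n)"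
    then obtain k where "\<forall>n\<ge>k. x \<in> X n" by blast
    then show "x \<in> B" using N[of "max k N"] by simp
  qed
qed

lemma liminf_in_right_continuous_filtration:
  assumes F: "is_filtration M F" and rc: "right_continuous_filtration F"
    and X: "\<And>n. X n \<in> F (inverse (real (Suc n)))"
  shows "(\<Union>k. \<Inter>n\<in>{k..}. X n) \<in> F 0"
proof -
  have "(\<Union>k. \<Inter>n\<in>{k..}. X n) \<in> F s" if "0 < s" for s
  proof -
    interpret sigma_algebra "space M" "F s"
      using F \<open>0 < s\<close> unfolding is_filtration_def by simp
    obtain m where m: "\<And>n. m \<le> n \<Longrightarrow> inverse (real (Suc n)) < s"
      using order_tendstoD(2)[OF LIMSEQ_inverse_real_of_nat \<open>0 < s\<close>]
      unfolding eventually_sequentially by blast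
    have "X n \<in> F s" if "m \<le> n" for n
      using F X[of n] m[OF that] unfolding is_filtration_def
      by (metis less_imp_le positive_imp_inverse_positive of_nat_0_less_iff zero_less_Suc subsetD)
    then have "(\<Union>k. \<Inter>n\<in>{k + m..}. X n) \<in> F s"
      by (intro countable_UN countable_INT') auto
    moreover have "(\<Union>k. \<Inter>n\<in>{k + m..}. X n) = (\<Union>k. \<Inter>n\<in>{k..}. X n)"
    proof (intro set_eqI iffI)
      fix x assume "x \<in> (\<Union>k. \<Inter>n\<in>{k + m..}. X n)"
      then obtain k where "\<forall>n\<ge>k + m. x \<in> X n" by auto
      then show "x \<in> (\<Union>k. \<Inter>n\<in>{k..}. X n)" by (intro UN_I[of "k + m"]) auto
    next
      fix x assume "x \<in> (\<Union>k. \<Inter>n\<in>{k..}. X n)"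
      then obtain k where "\<forall>n\<ge>k. x \<in> X n" by auto
      then show "x \<in> (\<Union>k. \<Inter>n\<in>{k + m..}. X n)" by (intro UN_I[of k]) auto
    qed
    ultimately show ?thesis by simp
  qed
  moreover have "F 0 = (\<Inter>s\<in>{0<..}. F s)"
    using rc unfolding right_continuous_filtration_def by simp
  ultimately show ?thesis by simp
qed

lemma borel_prod_sets_section:
  assumes "sigma_algebra (space M) S" and C: "C \<in> borel_prod_sets M S"
  shows "{\<omega> \<in> space M. (x, \<omega>) \<in> C} \<in> S"
  using C unfolding borel_prod_sets_def
proof (induction rule: sigma_sets.induct)
  interpret sigma_algebra "space M" S by fact
  {
    case (Basic C)
    then obtain R D where "C = R \<times> D" "D \<in> S" by blast
    moreover have "D \<subseteq> space M" using \<open>D \<in> S\<close> sets_into_space by auto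
    ultimately have "{\<omega> \<in> space M. (x, \<omega>) \<in> C} = (if x \<in> R then D else {})" by auto
    then show ?case using \<open>D \<in> S\<close> by simp
  next
    case Empty
    then show ?case by simp
  next
    case (Compl C)
    have "{\<omega> \<in> space M. (x, \<omega>) \<in> UNIV \<times> space M - C} = space M - {\<omega> \<in> space M. (x, \<omega>) \<in> C}"
      by auto
    then show ?case using Compl by auto
  next
    case (Union C)
    have "{\<omega> \<in> space M. (x, \<omega>) \<in> (\<Union>i. C i)} = (\<Union>i. {\<omega> \<in> space M. (x, \<omega>) \<in> C i})" by auto
    then show ?case using Union by auto
  }
qed

definition slab :: "real \<Rightarrow> real \<Rightarrow> (ennreal \<times> 'a) set \<Rightarrow> (ennreal \<times> (real \<times> 'a)) set" where
  "slab a b C = {(r, t, \<omega>). a < t \<and> t \<le> b \<and> (r, \<omega>) \<in> C}"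

lemma slab_measurable:
  assumes H: "monotone_sigma_family M H" and a: "0 \<le> a" "a \<le> b"
    and C: "C \<in> borel_prod_sets M (H a)"
  shows "slab a b C \<in> sets (borel \<Otimes>\<^sub>M optional_measure M H)"
  using C unfolding borel_prod_sets_def
proof (induction rule: sigma_sets.induct)
  interpret sigma_algebra "space M" "H a"
    using monotone_sigma_family_sigma_algebra[OF H a(1)] .
  {
    case (Basic C)
    then obtain R D where C: "C = R \<times> D" "R \<in> sets borel" "D \<in> H a" by blast
    then have "slab a b C = R \<times> ({a<..b} \<times> D)" unfolding slab_def by auto
    then show ?case
      using C optional_sets_interval[OF H a C(3)] by (simp add: sets_optional_measure)
  next
    case Empty
    have "slab a b ({} :: (ennreal \<times> 'a) set) = {}" unfolding slab_def by auto
    then show ?case by simp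
  next
    case (Compl C)
    have "slab a b (UNIV \<times> space M - C) = UNIV \<times> ({a<..b} \<times> space M) - slab a b C"
      unfolding slab_def by auto
    moreover have "UNIV \<times> ({a<..b} \<times> space M) \<in> sets (borel \<Otimes>\<^sub>M optional_measure M H)"
      using optional_sets_interval[OF H a top]
      by (intro pair_measureI) (auto simp: sets_optional_measure)
    ultimately show ?case using Compl by auto
  next
    case (Union C)
    have "slab a b (\<Union>i. C i) = (\<Union>i. slab a b (C i))" unfolding slab_def by auto
    then show ?case using Union by auto
  }
qed

text \<open>The optional splitting formula for the indicator of A, with 1_A' and 1_A'' in the roles
  of Y' and Y''.\<close>
definition set_splitting ::
  "'a measure \<Rightarrow> (real \<Rightarrow> 'a set set) \<Rightarrow> ('a \<Rightarrow> ennreal) \<Rightarrow> (real \<times> 'a) set \<Rightarrow>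
    (real \<times> 'a) set \<Rightarrow> (ennreal \<times> (real \<times> 'a)) set \<Rightarrow> 'a set \<Rightarrow> bool" where
  "set_splitting M F \<tau> A A' A'' E \<longleftrightarrow>
     A' \<in> optional_sets M F \<and> A'' \<in> sets (borel \<Otimes>\<^sub>M optional_measure M F) \<and> N_null M F \<tau> E \<and>
     (\<forall>\<omega>\<in>space M - E. \<forall>t\<ge>0. (t, \<omega>) \<in> A \<longleftrightarrow>
        (ennreal t < \<tau> \<omega> \<and> (t, \<omega>) \<in> A') \<or> (\<tau> \<omega> \<le> ennreal t \<and> (\<tau> \<omega>, t, \<omega>) \<in> A''))"

definition set_splittable ::
  "'a measure \<Rightarrow> (real \<Rightarrow> 'a set set) \<Rightarrow> ('a \<Rightarrow> ennreal) \<Rightarrow> (real \<times> 'a) set \<Rightarrow> bool" where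
  "set_splittable M F \<tau> A \<longleftrightarrow> (\<exists>A' A'' E. set_splitting M F \<tau> A A' A'' E)"

lemma set_splittable_empty: "set_splittable M F \<tau> {}"
  unfolding set_splittable_def set_splitting_def
  by (intro exI[of _ "{}"]) (auto simp: N_null_empty optional_sets_def sigma_sets.Empty)

lemma set_splittable_compl:
  assumes "set_splittable M F \<tau> A"
  shows "set_splittable M F \<tau> (timedom M - A)"
proof -
  obtain A' A'' E where split: "set_splitting M F \<tau> A A' A'' E"
    using assms unfolding set_splittable_def by blast
  have "timedom M - A' \<in> optional_sets M F"
    using split unfolding set_splitting_def optional_sets_def by (blast intro: sigma_sets.Compl)
  moreover have "UNIV \<times> timedom M - A'' \<in> sets (borel \<Otimes>\<^sub>M optional_measure M F)"
    using split sets.compl_sets[of A'' "borel \<Otimes>\<^sub>M optional_measure M F"]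
    unfolding set_splitting_def by (simp add: space_pair_measure space_optional_measure)
  moreover have "(t, \<omega>) \<in> timedom M" if "\<omega> \<in> space M" "0 \<le> t" for t \<omega>
    using that by (simp add: timedom_def)
  ultimately have "set_splitting M F \<tau> (timedom M - A) (timedom M - A') (UNIV \<times> timedom M - A'') E"
    using split unfolding set_splitting_def by (auto simp: not_less)
  then show ?thesis unfolding set_splittable_def by blast
qed

lemma set_splittable_countable_UN:
  assumes "\<And>i::nat. set_splittable M F \<tau> (A i)"
  shows "set_splittable M F \<tau> (\<Union>i. A i)"
proof -
  obtain A' A'' E where split: "\<And>i. set_splitting M F \<tau> (A i) (A' i) (A'' i) (E i)"
    using assms unfolding set_splittable_def by metis
  have "(\<Union>i. A' i) \<in> optional_sets M F"
    using split unfolding set_splitting_def by (intro optional_sets_countable_UN) blast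
  moreover have "(\<Union>i. A'' i) \<in> sets (borel \<Otimes>\<^sub>M optional_measure M F)"
    using split unfolding set_splitting_def by (intro sets.countable_UN) blast
  moreover have "N_null M F \<tau> (\<Union>i. E i)"
    using split unfolding set_splitting_def by (intro N_null_countable_UN) blast
  ultimately have "set_splitting M F \<tau> (\<Union>i. A i) (\<Union>i. A' i) (\<Union>i. A'' i) (\<Union>i. E i)"
    using split unfolding set_splitting_def by blast
  then show ?thesis unfolding set_splittable_def by blast
qed

lemma borel_prod_sets_sigma_algebra:
  assumes "sigma_algebra (space M) S"
  shows "sigma_algebra (UNIV \<times> space M) (borel_prod_sets M S)"
proof -
  interpret sigma_algebra "space M" S by fact
  show ?thesis
    unfolding borel_prod_sets_def using sets_into_space by (intro sigma_algebra_sigma_sets) blast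
qed

lemma set_splittable_interval:
  assumes H: "monotone_sigma_family M F" and "0 \<le> s" and B: "decomposable_at M F \<tau> s B"
  shows "set_splittable M F \<tau> ({s<..v} \<times> B)"
proof -
  obtain E B1 C where E: "N_null M F \<tau> E" and B1: "B1 \<in> F s" and C: "C \<in> borel_prod_sets M (F s)"
    and dec: "\<forall>\<omega>\<in>space M - E. (ennreal s < \<tau> \<omega> \<longrightarrow> (\<omega> \<in> B \<longleftrightarrow> \<omega> \<in> B1)) \<and>
                              (\<tau> \<omega> \<le> ennreal s \<longrightarrow> (\<omega> \<in> B \<longleftrightarrow> (\<tau> \<omega>, \<omega>) \<in> C))"
    using B unfolding decomposable_at_def by blast
  define b where "b = max s v"
  define C' where "C' = C \<inter> ({..ennreal s} \<times> space M) \<union> {ennreal s<..} \<times> B1"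
  interpret sa: sigma_algebra "space M" "F s"
    using monotone_sigma_family_sigma_algebra[OF H \<open>0 \<le> s\<close>] .
  interpret prod: sigma_algebra "UNIV \<times> space M" "borel_prod_sets M (F s)"
    using borel_prod_sets_sigma_algebra[OF sa.sigma_algebra_axioms] .
  have "C' \<in> borel_prod_sets M (F s)"
    unfolding C'_def using C B1 by (intro prod.Un prod.Int borel_prod_setsI) auto
  then have "slab s b C' \<in> sets (borel \<Otimes>\<^sub>M optional_measure M F)"
    using \<open>0 \<le> s\<close> by (intro slab_measurable[OF H]) (auto simp: b_def)
  moreover have "{s<..b} \<times> B1 \<in> optional_sets M F"
    using \<open>0 \<le> s\<close> B1 by (intro optional_sets_interval[OF H]) (auto simp: b_def)
  moreover have "(t, \<omega>) \<in> {s<..v} \<times> B \<longleftrightarrow>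
      (ennreal t < \<tau> \<omega> \<and> (t, \<omega>) \<in> {s<..b} \<times> B1) \<or> (\<tau> \<omega> \<le> ennreal t \<and> (\<tau> \<omega>, t, \<omega>) \<in> slab s b C')"
    if "\<omega> \<in> space M - E" for \<omega> t
  proof (cases "s < t \<and> t \<le> v")
    case True
    then have "ennreal s < ennreal t" using \<open>0 \<le> s\<close> by (simp add: ennreal_less_iff)
    then show ?thesis
      using True dec that by (auto simp: b_def slab_def C'_def not_le dest: order.strict_trans2)
  qed (auto simp: b_def slab_def)
  ultimately have "set_splitting M F \<tau> ({s<..v} \<times> B) ({s<..b} \<times> B1) (slab s b C') E"
    using E unfolding set_splitting_def by blast
  then show ?thesis unfolding set_splittable_def by blast
qed

lemma set_splittable_interval_Gfilt:
  assumes F: "is_filtration M F" and "0 \<le> u" and B: "B \<in> Gfilt M F \<tau> u"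
  shows "set_splittable M F \<tau> ({u<..v} \<times> B)"
proof -
  have "{u<..v} = (\<Union>n. {u + inverse (real (Suc n))<..v})"
  proof (intro set_eqI iffI)
    fix t assume "t \<in> {u<..v}"
    then obtain n where "inverse (real (Suc n)) < t - u"
      using reals_Archimedean[of "t - u"] by auto
    then show "t \<in> (\<Union>n. {u + inverse (real (Suc n))<..v})"
      using \<open>t \<in> {u<..v}\<close> by (intro UN_I[of n]) auto
  next
    fix t assume "t \<in> (\<Union>n. {u + inverse (real (Suc n))<..v})"
    then obtain n where "u + inverse (real (Suc n)) < t" "t \<le> v" by auto
    moreover have "0 < inverse (real (Suc n))" by simp
    ultimately show "t \<in> {u<..v}" unfolding greaterThanAtMost_iff by linarith
  qed
  then have "{u<..v} \<times> B = (\<Union>n. {u + inverse (real (Suc n))<..v} \<times> B)" by auto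
  also have "set_splittable M F \<tau> \<dots>"
    using \<open>0 \<le> u\<close>
    by (intro set_splittable_countable_UN set_splittable_interval
        is_filtration_monotone_sigma_family[OF F] decomposable_at_Gfilt[OF F _ _ B]) auto
  finally show ?thesis .
qed

lemma set_splittable_zero_Gfilt:
  assumes F: "is_filtration M F" and rc: "right_continuous_filtration F"
    and B: "B \<in> Gfilt M F \<tau> 0"
  shows "set_splittable M F \<tau> ({0} \<times> B)"
proof -
  define s where "s n = inverse (real (Suc n))" for n
  have "\<forall>n. decomposable_at M F \<tau> (s n) B"
    unfolding s_def by (intro allI decomposable_at_Gfilt[OF F _ _ B]) auto
  then obtain E B1 C where E: "\<And>n. N_null M F \<tau> (E n)" and B1: "\<And>n. B1 n \<in> F (s n)"
    and C: "\<And>n. C n \<in> borel_prod_sets M (F (s n))"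
    and dec: "\<And>n. \<forall>\<omega>\<in>space M - E n. (ennreal (s n) < \<tau> \<omega> \<longrightarrow> (\<omega> \<in> B \<longleftrightarrow> \<omega> \<in> B1 n)) \<and>
                              (\<tau> \<omega> \<le> ennreal (s n) \<longrightarrow> (\<omega> \<in> B \<longleftrightarrow> (\<tau> \<omega>, \<omega>) \<in> C n))"
    unfolding decomposable_at_def by metis
  define D1 where "D1 = (\<Union>k. \<Inter>n\<in>{k..}. B1 n)"
  define D2 where "D2 = (\<Union>k. \<Inter>n\<in>{k..}. {\<omega> \<in> space M. (0, \<omega>) \<in> C n})"
  have sa: "sigma_algebra (space M) (F (s n))" for n
    using F unfolding is_filtration_def s_def by simp
  have "D1 \<in> F 0" "D2 \<in> F 0"
    unfolding D1_def D2_def using B1 borel_prod_sets_section[OF sa C]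
    by (auto intro!: liminf_in_right_continuous_filtration[OF F rc] simp: s_def)
  then have "{0} \<times> D1 \<in> optional_sets M F" "UNIV \<times> ({0} \<times> D2) \<in> sets (borel \<Otimes>\<^sub>M optional_measure M F)"
    using optional_sets_zero[OF is_filtration_monotone_sigma_family[OF F]]
    by (auto intro!: pair_measureI simp: sets_optional_measure)
  moreover have "\<omega> \<in> B \<longleftrightarrow> \<omega> \<in> D1" if "\<omega> \<in> space M - (\<Union>n. E n)" "0 < \<tau> \<omega>" for \<omega>
  proof -
    have "\<forall>\<^sub>F n in sequentially. ennreal (s n) < \<tau> \<omega>"
      using order_tendstoD(2)[OF tendsto_ennrealI[OF LIMSEQ_inverse_real_of_nat]] \<open>0 < \<tau> \<omega>\<close>
      by (simp add: s_def)
    then have "\<forall>\<^sub>F n in sequentially. \<omega> \<in> B \<longleftrightarrow> \<omega> \<in> B1 n"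
      by eventually_elim (use dec that in blast)
    then show ?thesis unfolding D1_def by (rule mem_liminf_iff_eventually)
  qed
  moreover have "\<omega> \<in> B \<longleftrightarrow> \<omega> \<in> D2" if "\<omega> \<in> space M - (\<Union>n. E n)" "\<tau> \<omega> = 0" for \<omega>
  proof -
    have "\<forall>n. \<omega> \<in> B \<longleftrightarrow> \<omega> \<in> {\<omega> \<in> space M. (0, \<omega>) \<in> C n}"
    proof
      fix n
      show "\<omega> \<in> B \<longleftrightarrow> \<omega> \<in> {\<omega> \<in> space M. (0, \<omega>) \<in> C n}"
        using dec[of n] that by simp
    qed
    then show ?thesis unfolding D2_def by (intro mem_liminf_iff_eventually always_eventually)
  qed
  moreover have "N_null M F \<tau> (\<Union>n. E n)"
    using E by (rule N_null_countable_UN)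
  ultimately have "set_splitting M F \<tau> ({0} \<times> B) ({0} \<times> D1) (UNIV \<times> ({0} \<times> D2)) (\<Union>n. E n)"
    unfolding set_splitting_def by (auto simp: order.strict_iff_order)
  then show ?thesis unfolding set_splittable_def by blast
qed

lemma set_splittable_predictable:
  assumes F: "is_filtration M F" and rc: "right_continuous_filtration F"
    and A: "A \<in> predictable_sets M (Gfilt M F \<tau>)"
  shows "set_splittable M F \<tau> A"
  using A unfolding predictable_sets_def
proof (induction rule: sigma_sets.induct)
  case (Basic A)
  then show ?case
    using set_splittable_zero_Gfilt[OF F rc] set_splittable_interval_Gfilt[OF F] by blast
next
  case Empty
  show ?case by (rule set_splittable_empty)
next
  case (Compl A)
  from Compl(2) show ?case by (rule set_splittable_compl)
next
  case (Union A)
  from Union(2) show ?case by (rule set_splittable_countable_UN)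
qed

section \<open>Splitting of processes\<close>

lemma global_splitting_times_indicator:
  assumes Y: "splitting_on M F \<tau> Y A" and A: "set_splitting M F \<tau> A A' A'' E2"
  shows "global_splitting M F \<tau> (\<lambda>p. Y p * indicator A p)"
proof -
  obtain Y' Y'' E1 where Y': "optional_process M F Y'"
    and Y'': "(\<lambda>(u, p). Y'' u p) \<in> borel_measurable (borel \<Otimes>\<^sub>M optional_measure M F)"
    and E1: "N_null M F \<tau> E1"
    and split: "\<forall>\<omega>\<in>space M - E1. \<forall>t\<ge>0. Y (t, \<omega>) * indicator A (t, \<omega>) =
        (Y' (t, \<omega>) * indicator {p. ennreal (fst p) < \<tau> (snd p)} (t, \<omega>)
         + Y'' (\<tau> \<omega>) (t, \<omega>) * indicator {p. \<tau> (snd p) \<le> ennreal (fst p)} (t, \<omega>))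
        * indicator A (t, \<omega>)"
    using Y unfolding splitting_on_def by blast
  have A': "A' \<in> optional_sets M F" and A'': "A'' \<in> sets (borel \<Otimes>\<^sub>M optional_measure M F)"
    and E2: "N_null M F \<tau> E2"
    and A_eq: "\<forall>\<omega>\<in>space M - E2. \<forall>t\<ge>0. (t, \<omega>) \<in> A \<longleftrightarrow>
        (ennreal t < \<tau> \<omega> \<and> (t, \<omega>) \<in> A') \<or> (\<tau> \<omega> \<le> ennreal t \<and> (\<tau> \<omega>, t, \<omega>) \<in> A'')"
    using A unfolding set_splitting_def by auto
  define Z' where "Z' p = Y' p * indicator A' p" for p
  define Z'' where "Z'' u p = Y'' u p * indicator A'' (u, p)" for u p
  have "optional_process M F Z'"
    using Y' A' unfolding Z'_def optional_process_iff_measurable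
    by (intro borel_measurable_times borel_measurable_indicator) (auto simp: sets_optional_measure)
  moreover have "(\<lambda>(u, p). Z'' u p) = (\<lambda>x. (\<lambda>(u, p). Y'' u p) x * indicator A'' x)"
    unfolding Z''_def by auto
  then have "(\<lambda>(u, p). Z'' u p) \<in> borel_measurable (borel \<Otimes>\<^sub>M optional_measure M F)"
    using Y'' A'' by simp
  moreover have "N_null M F \<tau> (E1 \<union> E2)" using E1 E2 by (rule N_null_Un)
  moreover have "Y (t, \<omega>) * indicator A (t, \<omega>) * indicator (timedom M) (t, \<omega>) =
      (Z' (t, \<omega>) * indicator {p. ennreal (fst p) < \<tau> (snd p)} (t, \<omega>)
       + Z'' (\<tau> \<omega>) (t, \<omega>) * indicator {p. \<tau> (snd p) \<le> ennreal (fst p)} (t, \<omega>))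
      * indicator (timedom M) (t, \<omega>)"
    if "\<omega> \<in> space M - (E1 \<union> E2)" "0 \<le> t" for \<omega> t
    using split A_eq that unfolding Z'_def Z''_def
    by (cases "ennreal t < \<tau> \<omega>") (auto simp: indicator_def timedom_def)
  ultimately show ?thesis
    unfolding global_splitting_def splitting_on_def by blast
qed

lemma splitting_on_if_global_splitting:
  assumes "global_splitting M F \<tau> (\<lambda>p. Y p * indicator A p)"
  shows "splitting_on M F \<tau> Y A"
proof -
  obtain Y' Y'' E where Y': "optional_process M F Y'"
    and Y'': "(\<lambda>(u, p). Y'' u p) \<in> borel_measurable (borel \<Otimes>\<^sub>M optional_measure M F)"
    and E: "N_null M F \<tau> E"
    and split: "\<forall>\<omega>\<in>space M - E. \<forall>t\<ge>0.
        Y (t, \<omega>) * indicator A (t, \<omega>) * indicator (timedom M) (t, \<omega>) =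
        (Y' (t, \<omega>) * indicator {p. ennreal (fst p) < \<tau> (snd p)} (t, \<omega>)
         + Y'' (\<tau> \<omega>) (t, \<omega>) * indicator {p. \<tau> (snd p) \<le> ennreal (fst p)} (t, \<omega>))
        * indicator (timedom M) (t, \<omega>)"
    using assms unfolding global_splitting_def splitting_on_def by blast
  have "Y (t, \<omega>) * indicator A (t, \<omega>) =
      (Y' (t, \<omega>) * indicator {p. ennreal (fst p) < \<tau> (snd p)} (t, \<omega>)
       + Y'' (\<tau> \<omega>) (t, \<omega>) * indicator {p. \<tau> (snd p) \<le> ennreal (fst p)} (t, \<omega>))
      * indicator A (t, \<omega>)"
    if "\<omega> \<in> space M - E" "0 \<le> t" for \<omega> t
    using split[rule_format, OF that] that by (cases "(t, \<omega>) \<in> A") (auto simp: timedom_def)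
  then show ?thesis
    unfolding splitting_on_def using Y' Y'' E by blast
qed

theorem mainTheorem4:
  fixes M :: "'a measure" and F :: "real \<Rightarrow> 'a set set" and \<tau> :: "'a \<Rightarrow> ennreal"
    and A :: "(real \<times> 'a) set"
  assumes "prob_space M"
    and "is_filtration M F"
    and "right_continuous_filtration F"
    and "null_gen M (F_infty M F) \<subseteq> F 0"
    and "\<tau> \<in> borel_measurable M"
    and "A \<in> predictable_sets M (Gfilt M F \<tau>)"
  shows "A \<in> L_o M F \<tau> \<longleftrightarrow>
    (\<forall>Y. optional_process M (Gfilt M F \<tau>) Y \<longrightarrow>
         global_splitting M F \<tau> (\<lambda>p. Y p * indicator A p))"
proof -
  note F = assms(2) and A = assms(6)
  obtain A' A'' E where A_split: "set_splitting M F \<tau> A A' A'' E"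
    using set_splittable_predictable[OF F assms(3) A] unfolding set_splittable_def by blast
  have "A \<in> optional_sets M (Gfilt M F \<tau>)"
    using predictable_subset_optional[OF Gfilt_monotone_sigma_family[OF F]] A by blast
  then show ?thesis
    unfolding L_o_def
    using global_splitting_times_indicator[OF _ A_split] splitting_on_if_global_splitting
    by blast
qed

end
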